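(* If $G$ and $H$ are graphs on the same vertex set $V$, and $G\cup H$ denotes the graph on $V$ with edge set $E(G)\cup E(H)$, then \[\bar{\vartheta}(G\cup H)\le\bar{\vartheta}(G)\,\bar{\vartheta}(H).\]
   Context: Graphs are finite, simple and undirected. For a real $k>1$, a strict vector $k$-coloring of $G$ is a map $\varphi$ from $V(G)$ to the unit sphere of some $\mathbb{R}^d$ with $\varphi(u)^T\varphi(v)=-\frac1{k-1}$ whenever $u\sim v$; $\bar{\vartheta}(G)$ is the infimum of such $k$, and equals $\vartheta(\overline{G})$, the Lovász theta function of the complement of $G$. *)

theory Defs
  imports Complex_Main
begin

definition simple_graph :: "'a set \<Rightarrow> 'a set set \<Rightarrow> bool" where
  "simple_graph V E \<longleftrightarrow> finite V \<and>
     (\<forall>e\<in>E. \<exists>u v. u \<noteq> v \<and> u \<in> V \<and> v \<in> V \<and> e = {u, v})"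

definition strict_vector_coloring ::
  "'a set \<Rightarrow> 'a set set \<Rightarrow> real \<Rightarrow> nat \<Rightarrow> ('a \<Rightarrow> nat \<Rightarrow> real) \<Rightarrow> bool" where
  "strict_vector_coloring V E k d phi \<longleftrightarrow>
     (\<forall>v\<in>V. (\<Sum>i<d. (phi v i)^2) = 1) \<and>
     (\<forall>u\<in>V. \<forall>v\<in>V. {u, v} \<in> E \<longrightarrow> (\<Sum>i<d. phi u i * phi v i) = - 1 / (k - 1))"

definition theta_bar :: "'a set \<Rightarrow> 'a set set \<Rightarrow> real" where
  "theta_bar V E = Inf {k. k > 1 \<and> (\<exists>d phi. strict_vector_coloring V E k d phi)}"

end

theory Submission
  imports Defs
begin

text \<open>For \<open>k > 1\<close>, a strict vector \<open>k\<close>-colouring \<open>\<phi>\<close> is the same thing as an orthonormal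
  representation \<open>a\<close> of the complement with a unit handle \<open>c\<close> satisfying \<open>a\<^sub>v \<bullet> c = 1/\<surd>k\<close>:
  pass from \<open>\<phi>\<close> to \<open>a\<^sub>v = (1/\<surd>k, \<surd>((k-1)/k) \<phi>\<^sub>v)\<close>, and back by projecting away from \<open>c\<close>
  and rescaling. Tensor products of such representations multiply the inner products,
  so orthogonality for \<open>G\<close> or for \<open>H\<close> gives orthogonality for \<open>G \<union> H\<close>, and the handles
  \<open>c \<otimes> c'\<close> make angle \<open>1/\<surd>(kl)\<close>. Hence a \<open>k\<close>-colouring of \<open>G\<close> and an \<open>l\<close>-colouring
  of \<open>H\<close> yield a \<open>kl\<close>-colouring of \<open>G \<union> H\<close>; taking infima gives the theorem.\<close>

definition dot :: "nat \<Rightarrow> (nat \<Rightarrow> real) \<Rightarrow> (nat \<Rightarrow> real) \<Rightarrow> real" where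
  "dot d x y = (\<Sum>i<d. x i * y i)"

definition vcons :: "real \<Rightarrow> (nat \<Rightarrow> real) \<Rightarrow> nat \<Rightarrow> real" where
  "vcons a x i = (if i = 0 then a else x (i - 1))"

text \<open>The tensor product of \<open>x \<in> \<real>\<^sup>d\<^sup>1\<close> and \<open>y \<in> \<real>\<^sup>d\<^sup>2\<close>, with coordinate \<open>(p, q)\<close> stored at \<open>p * d2 + q\<close>.\<close>
definition tensor :: "nat \<Rightarrow> (nat \<Rightarrow> real) \<Rightarrow> (nat \<Rightarrow> real) \<Rightarrow> nat \<Rightarrow> real" where
  "tensor d2 x y i = x (i div d2) * y (i mod d2)"

definition handled_orthonormal_rep ::
  "'a set \<Rightarrow> 'a set set \<Rightarrow> real \<Rightarrow> nat \<Rightarrow> ('a \<Rightarrow> nat \<Rightarrow> real) \<Rightarrow> (nat \<Rightarrow> real) \<Rightarrow> bool" where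
  "handled_orthonormal_rep V E k d a c \<longleftrightarrow>
     dot d c c = 1 \<and>
     (\<forall>v\<in>V. dot d (a v) (a v) = 1 \<and> dot d (a v) c = 1 / sqrt k) \<and>
     (\<forall>u\<in>V. \<forall>v\<in>V. {u, v} \<in> E \<longrightarrow> dot d (a u) (a v) = 0)"

lemma strict_vector_coloring_dot:
  "strict_vector_coloring V E k d phi \<longleftrightarrow>
     (\<forall>v\<in>V. dot d (phi v) (phi v) = 1) \<and>
     (\<forall>u\<in>V. \<forall>v\<in>V. {u, v} \<in> E \<longrightarrow> dot d (phi u) (phi v) = - 1 / (k - 1))"
  by (simp add: strict_vector_coloring_def dot_def power2_eq_square)

lemma dot_vcons: "dot (Suc d) (vcons a x) (vcons b y) = a * b + dot d x y"
  by (simp add: dot_def vcons_def sum.lessThan_Suc_shift del: sum.lessThan_Suc)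

lemma dot_scale: "dot d (\<lambda>i. s * x i) (\<lambda>i. t * y i) = s * t * dot d x y"
  by (simp add: dot_def sum_distrib_left mult_ac)

lemma dot_scaled_diff:
  "dot d (\<lambda>i. s * (x i - t * z i)) (\<lambda>i. s * (y i - t * z i)) =
     s\<^sup>2 * (dot d x y - t * dot d x z - t * dot d y z + t\<^sup>2 * dot d z z)"
  by (simp add: dot_def algebra_simps power2_eq_square sum.distrib sum_subtractf sum_distrib_left)

lemma sum_tensor:
  fixes f g :: "nat \<Rightarrow> real"
  shows "(\<Sum>i<d1 * d2. f (i div d2) * g (i mod d2)) = (\<Sum>i<d1. f i) * (\<Sum>j<d2. g j)"
proof (induction d1)
  case 0
  then show ?case by simp
next
  case (Suc d1)
  let ?h = "\<lambda>i. f (i div d2) * g (i mod d2)"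
  have "(\<Sum>i<Suc d1 * d2. ?h i) = (\<Sum>i<d1 * d2. ?h i) + (\<Sum>i\<in>{d1 * d2..<d1 * d2 + d2}. ?h i)"
    by (simp add: lessThan_atLeast0 sum.atLeastLessThan_concat add.commute)
  also have "(\<Sum>i\<in>{d1 * d2..<d1 * d2 + d2}. ?h i) = (\<Sum>j<d2. ?h (j + d1 * d2))"
    using sum.shift_bounds_nat_ivl[of ?h 0 "d1 * d2" d2] by (simp add: lessThan_atLeast0 add.commute)
  also have "\<dots> = (\<Sum>j<d2. f d1 * g j)"
    by (rule sum.cong) auto
  finally show ?case
    using Suc by (simp add: sum_distrib_left distrib_right sum.distrib)
qed

lemma dot_tensor: "dot (d1 * d2) (tensor d2 x y) (tensor d2 x' y') = dot d1 x x' * dot d2 y y'"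
proof -
  have "dot (d1 * d2) (tensor d2 x y) (tensor d2 x' y') =
      (\<Sum>i<d1 * d2. (x (i div d2) * x' (i div d2)) * (y (i mod d2) * y' (i mod d2)))"
    unfolding dot_def tensor_def by (rule sum.cong) (simp_all add: mult_ac)
  also have "\<dots> = dot d1 x x' * dot d2 y y'"
    unfolding dot_def by (rule sum_tensor[where f = "\<lambda>p. x p * x' p" and g = "\<lambda>q. y q * y' q"])
  finally show ?thesis .
qed

lemma dot_zero_right [simp]: "dot d x (\<lambda>_. 0) = 0"
  by (simp add: dot_def)

lemma strict_vector_coloring_imp_handled_rep:
  assumes "k > 1" and "strict_vector_coloring V E k d x"
  shows "handled_orthonormal_rep V E k (Suc d)
           (\<lambda>v. vcons (1 / sqrt k) (\<lambda>i. sqrt ((k - 1) / k) * x v i)) (vcons 1 (\<lambda>_. 0))"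
proof -
  have dot_lift: "dot (Suc d) (vcons (1 / sqrt k) (\<lambda>i. sqrt ((k - 1) / k) * x u i))
                    (vcons (1 / sqrt k) (\<lambda>i. sqrt ((k - 1) / k) * x v i))
                  = 1 / k + (k - 1) / k * dot d (x u) (x v)" for u v
    using \<open>k > 1\<close> by (simp add: dot_vcons dot_scale real_sqrt_mult[symmetric])
  have "dot (Suc d) (vcons 1 (\<lambda>_. 0)) (vcons 1 (\<lambda>_. 0)) = 1"
    and "dot (Suc d) (vcons (1 / sqrt k) (\<lambda>i. sqrt ((k - 1) / k) * x v i)) (vcons 1 (\<lambda>_. 0)) = 1 / sqrt k"
    for v
    by (simp_all add: dot_vcons)
  with assms show ?thesis
    unfolding handled_orthonormal_rep_def strict_vector_coloring_dot
    by (auto simp: dot_lift add_divide_distrib[symmetric])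
qed

lemma handled_rep_imp_strict_vector_coloring:
  assumes "k > 1" and "handled_orthonormal_rep V E k d a c"
  shows "strict_vector_coloring V E k d (\<lambda>v i. sqrt (k / (k - 1)) * (a v i - c i / sqrt k))"
proof -
  have dot_proj: "dot d (\<lambda>i. sqrt (k / (k - 1)) * (a u i - c i / sqrt k))
                    (\<lambda>i. sqrt (k / (k - 1)) * (a v i - c i / sqrt k))
                  = k / (k - 1) * (dot d (a u) (a v) - 1 / k)" if "u \<in> V" "v \<in> V" for u v
    using dot_scaled_diff[of d "sqrt (k / (k - 1))" "a u" "1 / sqrt k" c "a v"] assms that
    by (simp add: handled_orthonormal_rep_def power2_eq_square real_sqrt_mult[symmetric])
  have "dot d (a v) (a v) = 1" and "{u, v} \<in> E \<Longrightarrow> dot d (a u) (a v) = 0"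
    if "u \<in> V" "v \<in> V" for u v
    using assms(2) that by (simp_all add: handled_orthonormal_rep_def)
  then show ?thesis
    unfolding strict_vector_coloring_dot using \<open>k > 1\<close>
    by (simp add: dot_proj) (simp add: field_simps)
qed

lemma handled_rep_tensor:
  assumes "handled_orthonormal_rep V EG k d1 a c" and "handled_orthonormal_rep V EH l d2 b c'"
  shows "handled_orthonormal_rep V (EG \<union> EH) (k * l) (d1 * d2)
           (\<lambda>v. tensor d2 (a v) (b v)) (tensor d2 c c')"
  using assms unfolding handled_orthonormal_rep_def
  by (auto simp: dot_tensor real_sqrt_mult)

lemma simple_graph_has_handled_rep:
  assumes "simple_graph V E"
  shows "\<exists>k>1. \<exists>d a c. handled_orthonormal_rep V E k d a c"
proof -
  have "finite V"
    using assms by (simp add: simple_graph_def)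
  then obtain g where g: "bij_betw g V {0..<card V}"
    using ex_bij_betw_finite_nat by blast
  define n where "n = card V + 2"
  have g_less: "g v < n" if "v \<in> V" for v
    using bij_betwE[OF g] that by (auto simp: n_def)
  have edge_distinct: "g u \<noteq> g v" if "u \<in> V" "v \<in> V" "{u, v} \<in> E" for u v
  proof -
    have "u \<noteq> v"
      using assms that(3) unfolding simple_graph_def by (metis doubleton_eq_iff)
    then show ?thesis
      using bij_betw_imp_inj_on[OF g] that(1,2) by (auto dest: inj_onD)
  qed
  define a where "a v i = (if i = g v then 1 else 0 :: real)" for v i
  define c where "c i = 1 / sqrt n" for i :: nat
  have "real n > 1"
    by (simp add: n_def)
  moreover have "handled_orthonormal_rep V E (real n) n a c"
    unfolding handled_orthonormal_rep_def using g_less edge_distinct \<open>real n > 1\<close>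
    by (auto simp: dot_def a_def c_def real_sqrt_mult[symmetric]
          if_distrib[of "\<lambda>x. x * _"] if_distrib[of "\<lambda>x. x / _"] cong: if_cong)
  ultimately show ?thesis
    by blast
qed

lemma strict_vector_coloring_union:
  assumes "k > 1" "strict_vector_coloring V EG k d1 x" and "l > 1" "strict_vector_coloring V EH l d2 y"
  shows "\<exists>d phi. strict_vector_coloring V (EG \<union> EH) (k * l) d phi"
proof -
  have "k * l > 1"
    using assms(1,3) by (metis less_1_mult)
  with handled_rep_tensor[OF strict_vector_coloring_imp_handled_rep[OF assms(1,2)]
                              strict_vector_coloring_imp_handled_rep[OF assms(3,4)]]
  show ?thesis
    by (blast dest: handled_rep_imp_strict_vector_coloring)
qed

lemma simple_graph_has_strict_vector_coloring:
  assumes "simple_graph V E"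
  shows "\<exists>k>1. \<exists>d phi. strict_vector_coloring V E k d phi"
  using simple_graph_has_handled_rep[OF assms] handled_rep_imp_strict_vector_coloring by blast

lemma cInf_le_mult_cInf:
  fixes A B C :: "real set"
  assumes "A \<noteq> {}" "B \<noteq> {}" "\<forall>x\<in>A. x > 0" "\<forall>y\<in>B. y > 0" "bdd_below C"
    and "\<forall>x\<in>A. \<forall>y\<in>B. x * y \<in> C"
  shows "Inf C \<le> Inf A * Inf B"
proof -
  have "Inf A \<ge> 0"
    using assms(1,3) by (meson cInf_greatest less_le)
  have le_times: "Inf C \<le> Inf A * y" if "y \<in> B" for y
  proof -
    have "Inf C / y \<le> Inf A"
      using assms that by (intro cInf_greatest) (auto simp: divide_le_eq intro: cInf_lower)
    then show ?thesis
      using assms(4) that by (simp add: divide_le_eq mult.commute)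
  qed
  show ?thesis
  proof (cases "Inf A = 0")
    case True
    then show ?thesis
      using le_times assms(2) by auto
  next
    case False
    then have "Inf C / Inf A \<le> Inf B"
      using \<open>Inf A \<ge> 0\<close> le_times assms(2) by (intro cInf_greatest) (auto simp: divide_le_eq mult.commute)
    then show ?thesis
      using False \<open>Inf A \<ge> 0\<close> by (simp add: divide_le_eq mult.commute)
  qed
qed

theorem corollary4p5:
  fixes V :: "'a set" and EG EH :: "'a set set"
  assumes "simple_graph V EG" and "simple_graph V EH"
  shows "theta_bar V (EG \<union> EH) \<le> theta_bar V EG * theta_bar V EH"
proof -
  define S where "S E = {k. k > 1 \<and> (\<exists>d phi. strict_vector_coloring V E k d phi)}" for E
  have "Inf (S (EG \<union> EH)) \<le> Inf (S EG) * Inf (S EH)"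
  proof (rule cInf_le_mult_cInf)
    show "S EG \<noteq> {}" "S EH \<noteq> {}"
      using simple_graph_has_strict_vector_coloring assms by (auto simp: S_def)
    show "bdd_below (S (EG \<union> EH))"
      by (rule bdd_belowI[of _ 1]) (simp add: S_def)
    show "\<forall>k\<in>S EG. \<forall>l\<in>S EH. k * l \<in> S (EG \<union> EH)"
      using strict_vector_coloring_union less_1_mult by (fastforce simp: S_def)
  qed (auto simp: S_def)
  then show ?thesis
    by (simp add: theta_bar_def S_def)
qed

end
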